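(* Let $A$ and $B$ be flat layouts. Then $\Phi_A=\Phi_B$ if and only if $\mathrm{coal}^\flat(A)=\mathrm{coal}^\flat(B)$.
   Context: A flat layout $L=(s_1,\dots,s_m):(d_1,\dots,d_m)$ consists of a tuple of positive integers (shape) and a tuple of nonnegative integers (stride) of the same length; its modes are $s_i:d_i$. Its layout function $\Phi_L:[0,s_1\cdots s_m)\to\mathbb{Z}$ is $\Phi_L(x)=\sum_{i=1}^m x_id_i$ where $x_i=\lfloor x/(s_1\cdots s_{i-1})\rfloor \bmod s_i$ (so equality $\Phi_A=\Phi_B$ includes equality of domains). $\mathrm{squeeze}(L)$ removes all modes with $s_i=1$. $\mathrm{coal}^\flat(L)$ is obtained from $\mathrm{squeeze}(L)$ by repeatedly replacing adjacent modes $s_i,s_{i+1}:d_i,d_{i+1}$ with $d_{i+1}=s_id_i$ by the single mode $s_is_{i+1}:d_i$, until no such adjacent pair remains (equivalently, merging each maximal run of consecutive modes linked by $d_{i+1}=s_id_i$ into one mode with shape the product and stride the first stride). *)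

theory Defs
  imports Main
begin

type_synonym layout = "(nat \<times> nat) list"

definition shape :: "layout \<Rightarrow> nat list" where
  "shape L = map fst L"

definition stride :: "layout \<Rightarrow> nat list" where
  "stride L = map snd L"

definition flat_layout :: "layout \<Rightarrow> bool" where
  "flat_layout L \<longleftrightarrow> (\<forall>m\<in>set L. fst m > 0)"

definition layout_size :: "layout \<Rightarrow> nat" where
  "layout_size L = prod_list (shape L)"

text \<open>Coordinate x_i = floor(x / (s_1 ... s_{i-1})) mod s_i (0-indexed here).\<close>
definition coord :: "layout \<Rightarrow> nat \<Rightarrow> nat \<Rightarrow> nat" where
  "coord L x i = (x div prod_list (take i (shape L))) mod (shape L ! i)"

text \<open>The layout function, as a partial function with domain [0, size L);
  None outside the domain, so equality of layout functions includes equality of domains.\<close>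
definition layout_fun :: "layout \<Rightarrow> nat \<Rightarrow> int option" where
  "layout_fun L x = (if x < layout_size L
     then Some (\<Sum>i<length L. int (coord L x i) * int (stride L ! i))
     else None)"

definition squeeze :: "layout \<Rightarrow> layout" where
  "squeeze L = filter (\<lambda>m. fst m \<noteq> 1) L"

fun merge_runs :: "layout \<Rightarrow> layout" where
  "merge_runs [] = []"
| "merge_runs (m # rest) =
     (case merge_runs rest of
        [] \<Rightarrow> [m]
      | m2 # r \<Rightarrow> (if snd m2 = fst m * snd m
                    then (fst m * fst m2, snd m) # r
                    else m # m2 # r))"

definition coal_flat :: "layout \<Rightarrow> layout" where
  "coal_flat L = merge_runs (squeeze L)"

end

theory Submission
  imports Defs
begin

text \<open>Squeezing and merging a run leave the layout function unchanged, since
  x mod (s s') = x mod s + s ((x div s) mod s') and x div (s s') = (x div s) div s'.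
  Hence it suffices to show that a coalesced layout (no unit shapes, no mergeable
  adjacent modes) is determined by its layout function. Its first stride is
  the value at 1; its first shape s is recovered because the value at s is the
  second stride (or s is the size), which coalescedness makes different from s times
  the first stride, whereas a layout with a larger first shape has value s times the
  first stride there. Restricting to multiples of s then determines the remaining
  modes by induction.\<close>

fun layout_eval :: "layout \<Rightarrow> nat \<Rightarrow> nat" where
  "layout_eval [] x = 0"
| "layout_eval (m # L) x = x mod fst m * snd m + layout_eval L (x div fst m)"

fun coalesced :: "layout \<Rightarrow> bool" where
  "coalesced [] = True"
| "coalesced [m] \<longleftrightarrow> 1 < fst m"
| "coalesced (m # m' # L) \<longleftrightarrow> 1 < fst m \<and> snd m' \<noteq> fst m * snd m \<and> coalesced (m' # L)"

lemma layout_eval_0 [simp]: "layout_eval L 0 = 0"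
  by (induction L) auto

lemma layout_size_Nil [simp]: "layout_size [] = 1"
  by (simp add: layout_size_def shape_def)

lemma layout_size_Cons [simp]: "layout_size (m # L) = fst m * layout_size L"
  by (simp add: layout_size_def shape_def)

lemma coord_Cons_0 [simp]: "coord ((s, d) # L) x 0 = x mod s"
  by (simp add: coord_def shape_def)

lemma coord_Cons_Suc [simp]: "coord ((s, d) # L) x (Suc i) = coord L (x div s) i"
  by (simp add: coord_def shape_def div_mult2_eq)

lemma sum_coord_stride_eq_layout_eval:
  "(\<Sum>i<length L. int (coord L x i) * int (stride L ! i)) = int (layout_eval L x)"
  by (induction L arbitrary: x)
    (auto simp: sum.lessThan_Suc_shift stride_def simp del: sum.lessThan_Suc)

lemma layout_fun_eq_layout_eval:
  "layout_fun L x = (if x < layout_size L then Some (int (layout_eval L x)) else None)"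
  by (simp add: layout_fun_def sum_coord_stride_eq_layout_eval)

lemma dom_layout_fun: "dom (layout_fun L) = {..<layout_size L}"
  by (auto simp: layout_fun_eq_layout_eval split: if_splits)

lemma layout_fun_eq_iff:
  "layout_fun A = layout_fun B \<longleftrightarrow>
     layout_size A = layout_size B \<and> (\<forall>x < layout_size A. layout_eval A x = layout_eval B x)"
proof
  assume eq: "layout_fun A = layout_fun B"
  then have size_eq: "layout_size A = layout_size B"
    by (metis dom_layout_fun lessThan_eq_iff)
  have "layout_eval A x = layout_eval B x" if "x < layout_size A" for x
    using fun_cong[OF eq, of x] that size_eq by (simp add: layout_fun_eq_layout_eval)
  with size_eq show "layout_size A = layout_size B \<and>
      (\<forall>x < layout_size A. layout_eval A x = layout_eval B x)" by blast
qed (auto simp: layout_fun_eq_layout_eval)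

lemma layout_eval_squeeze: "layout_eval (squeeze L) x = layout_eval L x"
  unfolding squeeze_def by (induction L arbitrary: x) auto

lemma layout_size_squeeze: "layout_size (squeeze L) = layout_size L"
  unfolding squeeze_def by (induction L) auto

lemma layout_size_merge_runs: "layout_size (merge_runs L) = layout_size L"
  by (induction L) (auto split: list.split)

lemma layout_eval_merge_runs: "layout_eval (merge_runs L) x = layout_eval L x"
proof (induction L arbitrary: x)
  case (Cons m L)
  obtain s d where m: "m = (s, d)" by fastforce
  show ?case
  proof (cases "merge_runs L")
    case (Cons m' R)
    obtain s' d' where m': "m' = (s', d')" by fastforce
    show ?thesis
    proof (cases "d' = s * d")
      case True
      have "layout_eval (merge_runs (m # L)) x = x mod (s * s') * d + layout_eval R (x div (s * s'))"
        using Cons m m' True by simp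
      also have "\<dots> = x mod s * d + (x div s mod s') * d' + layout_eval R (x div s div s')"
        unfolding mod_mult2_eq div_mult2_eq by (simp add: True algebra_simps)
      also have "\<dots> = layout_eval (m # L) x"
        using Cons.IH[of "x div s"] Cons m m' by simp
      finally show ?thesis .
    qed (use Cons.IH Cons m m' in simp)
  qed (use Cons.IH m in simp)
qed simp

lemma layout_fun_coal_flat: "layout_fun (coal_flat L) = layout_fun L"
  by (simp add: layout_fun_eq_iff coal_flat_def layout_eval_merge_runs layout_size_merge_runs
      layout_eval_squeeze layout_size_squeeze)

lemma coalesced_ConsD: "coalesced (m # L) \<Longrightarrow> 1 < fst m \<and> coalesced L"
  by (cases L) auto

lemma coalesced_merge_runs: "\<forall>m \<in> set L. 1 < fst m \<Longrightarrow> coalesced (merge_runs L)"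
proof (induction L)
  case (Cons m L)
  obtain s d where m: "m = (s, d)" by fastforce
  have IH: "coalesced (merge_runs L)" and "1 < s"
    using Cons m by simp_all
  show ?case
  proof (cases "merge_runs L")
    case (Cons m' R)
    obtain s' d' where m': "m' = (s', d')" by fastforce
    have "1 < s'"
      using IH Cons m' coalesced_ConsD[of m' R] by simp
    with \<open>1 < s\<close> have "1 < s * s'"
      using less_1_mult by blast
    with IH Cons m m' \<open>1 < s\<close> show ?thesis
      by (cases R) (auto simp: mult.left_commute)
  qed (use m \<open>1 < s\<close> in simp)
qed simp

lemma coalesced_coal_flat: "flat_layout L \<Longrightarrow> coalesced (coal_flat L)"
  unfolding coal_flat_def
  by (rule coalesced_merge_runs) (auto simp: squeeze_def flat_layout_def)

lemma coalesced_layout_size_pos: "coalesced L \<Longrightarrow> 0 < layout_size L"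
  by (induction L rule: coalesced.induct) auto

lemma coalesced_Cons_layout_size:
  "coalesced ((s, d) # L) \<Longrightarrow> 1 < s \<and> s \<le> layout_size ((s, d) # L)"
  using coalesced_ConsD[of "(s, d)" L] coalesced_layout_size_pos[of L] by simp

lemma coalesced_head_shape_le:
  assumes coal: "coalesced ((s, d) # C)" "coalesced ((t, d) # D)"
    and eq: "layout_fun ((s, d) # C) = layout_fun ((t, d) # D)"
  shows "t \<le> s"
proof (rule ccontr)
  assume "\<not> t \<le> s"
  then have "s < layout_size ((t, d) # D)"
    using coalesced_Cons_layout_size[OF coal(2)] by linarith
  then have s_in_dom: "s < layout_size ((s, d) # C)"
    using eq by (simp add: layout_fun_eq_iff)
  show False
  proof (cases C)
    case Nil
    then show False using s_in_dom by simp
  next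
    case (Cons m' C')
    obtain s' d' where m': "m' = (s', d')" by fastforce
    have "1 < s" "1 < s'" "d' \<noteq> s * d"
      using coal(1) coalesced_ConsD[of m' C'] Cons m' by auto
    have "layout_eval ((s, d) # C) s = layout_eval ((t, d) # D) s"
      using eq s_in_dom unfolding layout_fun_eq_iff by blast
    moreover have "layout_eval ((s, d) # C) s = d'"
      using Cons m' \<open>1 < s\<close> \<open>1 < s'\<close> by simp
    moreover have "layout_eval ((t, d) # D) s = s * d"
      using \<open>\<not> t \<le> s\<close> by simp
    ultimately show False
      using \<open>d' \<noteq> s * d\<close> by simp
  qed
qed

lemma coalesced_eq_if_layout_fun_eq:
  "coalesced C \<Longrightarrow> coalesced D \<Longrightarrow> layout_fun C = layout_fun D \<Longrightarrow> C = D"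
proof (induction C arbitrary: D)
  case Nil
  then show ?case
    by (cases D) (auto simp: layout_fun_eq_iff dest: coalesced_Cons_layout_size)
next
  case (Cons m C)
  obtain s d where m: "m = (s, d)" by fastforce
  obtain t e D' where D: "D = (t, e) # D'"
    using Cons.prems coalesced_Cons_layout_size[of s d C]
    by (cases D) (fastforce simp: layout_fun_eq_iff m)+
  note coal = Cons.prems(1)[unfolded m] Cons.prems(2)[unfolded D]
  note eq = Cons.prems(3)[unfolded m D, unfolded layout_fun_eq_iff]
  have "1 < s" "1 < t"
    using coalesced_Cons_layout_size coal by blast+
  have "1 < layout_size ((s, d) # C)"
    using coalesced_Cons_layout_size[OF coal(1)] by linarith
  then have "layout_eval ((s, d) # C) 1 = layout_eval ((t, e) # D') 1"
    using eq by blast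
  then have "d = e"
    using \<open>1 < s\<close> \<open>1 < t\<close> by simp
  then have "t \<le> s" "s \<le> t"
    using coalesced_head_shape_le coal Cons.prems(3) m D by metis+
  then have "s = t" by simp
  have "layout_fun C = layout_fun D'"
    unfolding layout_fun_eq_iff
  proof (intro conjI allI impI)
    show "layout_size C = layout_size D'"
      using eq \<open>s = t\<close> \<open>1 < s\<close> by simp
    fix y assume "y < layout_size C"
    then have "y * s < layout_size ((s, d) # C)"
      using \<open>1 < s\<close> by simp
    then have "layout_eval ((s, d) # C) (y * s) = layout_eval ((t, e) # D') (y * s)"
      using eq by blast
    then show "layout_eval C y = layout_eval D' y"
      using \<open>s = t\<close> \<open>1 < s\<close> by simp
  qed
  then have "C = D'"
    using Cons.IH coal coalesced_ConsD by blast
  then show ?case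
    using m D \<open>d = e\<close> \<open>s = t\<close> by simp
qed

theorem mainTheorem10:
  fixes A B :: layout
  assumes "flat_layout A" and "flat_layout B"
  shows "layout_fun A = layout_fun B \<longleftrightarrow> coal_flat A = coal_flat B"
proof -
  have "layout_fun A = layout_fun B \<longleftrightarrow> layout_fun (coal_flat A) = layout_fun (coal_flat B)"
    by (simp add: layout_fun_coal_flat)
  also have "\<dots> \<longleftrightarrow> coal_flat A = coal_flat B"
    using coalesced_eq_if_layout_fun_eq coalesced_coal_flat assms by metis
  finally show ?thesis .
qed

end
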